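(* Consider a repeater chain in the model described in the context with $M+N+1$ nodes labelled $1,\dots,M+N+1$ and elementary-link fidelity $F$. Suppose nodes $1,\dots,M$ are at fixed locations with fixed distances between consecutive ones, nodes $M$ and $M+N+1$ are a distance $L$ apart, and the $N$ repeater nodes $M+1,\dots,M+N$ are placed along a straight line between them. Let $\ell_i\ge0$ be the distance between nodes $M+i-1$ and $M+i$ for $i=1,\dots,N+1$, with $\sum_i\ell_i=L$. Suppose nodes $1,\dots,M-1$ have memory coherence time $T$, while nodes $M,M+1,\dots,M+N+1$ have perfect quantum memory. Then the secret-key rate $\mathrm{SKR}$ of the chain, as a function of $(\ell_1,\dots,\ell_{N+1})$, is maximal when $\ell_i=L/(N+1)$ for all $i$.
   Context: Repeater-chain model (swap-ASAP, synchronized attempts). Edge $j$ connects nodes $j$ and $j+1$ and has length $l_j\ge0$ (km). Entanglement generation proceeds in synchronized rounds of duration $t_{\mathrm{att}}=\frac1c\max_jl_j$, $c=200{,}000$ km/s. In each round, each edge not yet successful attempts, succeeding independently with probability $p_j=10^{-\alpha l_j/10}$, $\alpha=0.2\ \mathrm{km}^{-1}$; the number of rounds $X_j$ until edge $j$ succeeds is geometric on $\{1,2,\dots\}$ with parameter $p_j$, independently across edges. Edge $j$ completes at time $t_j=t_{\mathrm{att}}X_j$, and the chain completes at $T_{\mathrm{done}}=t_{\mathrm{att}}\max_jX_j$; the entangling rate is $R=1/\mathbb E[T_{\mathrm{done}}]$. Each successful edge produces the two-qubit Werner state $W_{w_0}=w_0|\phi^+\rangle\langle\phi^+|+(1-w_0)\mathbb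 1/4$ with $w_0=(4F-1)/3$. Each repeater node (every node other than the two end nodes) performs entanglement swapping as soon as both of its links exist; meanwhile a stored qubit $k$ held for time $t$ in a memory with coherence time $T$ undergoes $\rho\mapsto e^{-t/T}\rho+(1-e^{-t/T})\frac{\mathbb 1_2}{2}\otimes\mathrm{Tr}_k\rho$; a node with perfect memory undergoes no such noise, and end nodes measure immediately and suffer no memory noise. Consequently, given the completion times, the end-to-end state is the Werner state with parameter $w_{e2e}=w_0^{K}\prod_{i}e^{-|t_i-t_{i-1}|/T}$, where $K$ is the number of edges and the product is over repeater nodes $i$ with imperfect memory (node $i$ sitting between edges $i-1$ and $i$); the delivered state (not conditioned on completion times) is the Werner state with parameter $\mathbb E[w_{e2e}]$. Its quantum bit error rates are $Q_X=Q_Z=(1-\mathbb E[w_{e2e}])/2$, the secret-key fraction is $\mathrm{SKF}=\max(0,1-h(Q_X)-h(Q_Z))$ with $h(x)=-x\log_2x-(1-x)\log_2(1-x)$, and the secret-key rate is $\mathrm{SKR}=R\cdot\mathrm{SKF}$. *)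

theory Defs
  imports "HOL-Probability.Probability"
begin

text \<open>Physical constants: speed of light in fibre (km/s) and attenuation (1/km).\<close>
definition c_fib :: real where "c_fib = 200000"
definition alpha_att :: real where "alpha_att = 0.2"

definition p_succ :: "real \<Rightarrow> real" where
  "p_succ l = 10 powr (- alpha_att * l / 10)"

text \<open>A chain has K edges, numbered 1..K; edge j connects nodes j and j+1 and has
  length len j.  Synchronized round duration.\<close>
definition t_att :: "nat \<Rightarrow> (nat \<Rightarrow> real) \<Rightarrow> real" where
  "t_att K len = Max (len ` {1..K}) / c_fib"

definition rounds_dist :: "nat \<Rightarrow> (nat \<Rightarrow> real) \<Rightarrow> (nat \<Rightarrow> nat) pmf" where
  "rounds_dist K len =
     Pi_pmf {1..K} 0 (\<lambda>j. map_pmf Suc (geometric_pmf (p_succ (len j))))"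

definition E_T_done :: "nat \<Rightarrow> (nat \<Rightarrow> real) \<Rightarrow> real" where
  "E_T_done K len = t_att K len *
     measure_pmf.expectation (rounds_dist K len) (\<lambda>X. real (Max (X ` {1..K})))"

definition ent_rate :: "nat \<Rightarrow> (nat \<Rightarrow> real) \<Rightarrow> real" where
  "ent_rate K len = 1 / E_T_done K len"

definition w0 :: "real \<Rightarrow> real" where "w0 F = (4 * F - 1) / 3"

text \<open>Expected end-to-end Werner parameter E[w_e2e]; S is the set of repeater nodes with
  imperfect memory (coherence time T); node i sits between edges i-1 and i, and
  t_i = t_att * X_i.\<close>
definition E_w_e2e :: "nat \<Rightarrow> (nat \<Rightarrow> real) \<Rightarrow> real \<Rightarrow> real \<Rightarrow> nat set \<Rightarrow> real" where
  "E_w_e2e K len F T S =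
     measure_pmf.expectation (rounds_dist K len)
       (\<lambda>X. w0 F ^ K * (\<Prod>i\<in>S. exp (- \<bar>t_att K len * real (X i) - t_att K len * real (X (i - 1))\<bar> / T)))"

definition bin_entropy :: "real \<Rightarrow> real" where
  "bin_entropy x = - x * log 2 x - (1 - x) * log 2 (1 - x)"

definition SKF :: "nat \<Rightarrow> (nat \<Rightarrow> real) \<Rightarrow> real \<Rightarrow> real \<Rightarrow> nat set \<Rightarrow> real" where
  "SKF K len F T S =
     (let Q = (1 - E_w_e2e K len F T S) / 2 in max 0 (1 - bin_entropy Q - bin_entropy Q))"

definition SKR :: "nat \<Rightarrow> (nat \<Rightarrow> real) \<Rightarrow> real \<Rightarrow> real \<Rightarrow> nat set \<Rightarrow> real" where
  "SKR K len F T S = ent_rate K len * SKF K len F T S"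

text \<open>Edge lengths of the chain with nodes 1..M+N+1: edges 1..M-1 have fixed lengths d j,
  edge M-1+i (between nodes M+i-1 and M+i) has length l i, for i = 1..N+1.\<close>
definition chain_len :: "nat \<Rightarrow> (nat \<Rightarrow> real) \<Rightarrow> (nat \<Rightarrow> real) \<Rightarrow> nat \<Rightarrow> real" where
  "chain_len M d l j = (if j < M then d j else l (j + 1 - M))"

end

theory Submission
  imports Defs
begin

text \<open>
  Moving the repeaters only changes the edges between nodes M and M+N+1, and both factors of
  the SKR improve when these edges are made equal.  Rate: the number of rounds max_j X_j has
  distribution function P(max_j X_j \<le> n) = \<Prod>_j (1 - (1 - p_j)^n); since
  x \<mapsto> ln (1 - (1 - e^(-a x))^n) is concave, Jensen's inequality shows that for a fixed total
  length this product is largest for equal lengths, so max_j X_j becomes stochastically smaller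
  and its mean decreases.  The round duration, proportional to the longest edge, cannot grow
  either.  Key fraction: only nodes 2, ..., M-1 decohere, and their waiting times are the
  round duration times a function of X_1, ..., X_(M-1), whose distribution is unchanged; so a
  shorter round can only increase the expected Werner parameter.
\<close>

lemma geometric_tail_ratio_mono:
  fixes v w :: real and n :: nat
  assumes "0 \<le> v" "v \<le> w" "w < 1" "n \<ge> 1"
  shows "(1 - v) * v ^ (n - 1) / (1 - v ^ n) \<le> (1 - w) * w ^ (n - 1) / (1 - w ^ n)"
proof -
  define S where "S x = (\<Sum>i<n. x ^ i)" for x :: real
  have ratio_eq: "(1 - x) * x ^ (n - 1) / (1 - x ^ n) = x ^ (n - 1) / S x"
    if "x < 1" for x :: real
  proof -
    have "1 - x ^ n = (1 - x) * S x" unfolding S_def by (rule one_diff_power_eq)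
    then show ?thesis using that by simp
  qed
  have S_ge_1: "S x \<ge> 1" if "0 \<le> x" for x :: real
  proof -
    have "S x = 1 + (\<Sum>i\<in>{..<n} - {0}. x ^ i)"
      unfolding S_def using assms(4) by (subst sum.remove[of _ 0]) auto
    moreover have "(\<Sum>i\<in>{..<n} - {0}. x ^ i) \<ge> 0" using that by (intro sum_nonneg) auto
    ultimately show ?thesis by simp
  qed
  have "v ^ (n - 1) * S w \<le> w ^ (n - 1) * S v"
    unfolding S_def sum_distrib_left
  proof (rule sum_mono)
    fix i assume i: "i \<in> {..<n}"
    have "v ^ (n - 1) * w ^ i = v ^ i * (v ^ (n - 1 - i) * w ^ i)"
      using i by (simp add: power_add[symmetric] mult.assoc)
    also have "\<dots> \<le> v ^ i * (w ^ (n - 1 - i) * w ^ i)"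
      using assms by (intro mult_left_mono mult_right_mono power_mono) auto
    also have "\<dots> = w ^ (n - 1) * v ^ i"
      using i by (simp add: power_add[symmetric])
    finally show "v ^ (n - 1) * w ^ i \<le> w ^ (n - 1) * v ^ i" .
  qed
  then have "v ^ (n - 1) / S v \<le> w ^ (n - 1) / S w"
    using S_ge_1[of v] S_ge_1[of w] assms by (simp add: divide_simps mult.commute)
  then show ?thesis using ratio_eq[of v] ratio_eq[of w] assms by simp
qed

lemma concave_on_ln_one_minus_power:
  fixes a :: real and n :: nat
  assumes a: "a > 0" and n: "n \<ge> 1"
  shows "concave_on {0..} (\<lambda>x. ln (1 - (1 - exp (- a * x)) ^ n))"
  unfolding concave_on_def
proof (rule convex_on_realI)
  define v where "v x = 1 - exp (- a * x)" for x
  have v: "0 \<le> v x \<and> v x < 1" if "x \<ge> 0" for x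
    using a that by (auto simp: v_def mult_nonneg_nonneg)
  show "connected {0::real..}" by simp
  show "((\<lambda>x. - ln (1 - (1 - exp (- a * x)) ^ n)) has_real_derivative
      n * a * (1 - v x) * v x ^ (n - 1) / (1 - v x ^ n)) (at x)" if "x \<in> {0..}" for x
  proof -
    have "((\<lambda>x. 1 - exp (- a * x)) has_real_derivative a * exp (- a * x)) (at x)"
      by (auto intro!: derivative_eq_intros)
    from DERIV_power[OF this, of n]
    have "((\<lambda>x. - ln (1 - (1 - exp (- a * x)) ^ n)) has_real_derivative
        - (- (n * (1 - exp (- a * x)) ^ (n - 1) * (a * exp (- a * x))) / (1 - (1 - exp (- a * x)) ^ n))) (at x)"
      using v[of x] that n by (auto intro!: derivative_eq_intros simp: v_def power_less_one_iff)
    then show ?thesis by (simp add: v_def mult_ac)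
  qed
  show "n * a * (1 - v x) * v x ^ (n - 1) / (1 - v x ^ n)
      \<le> n * a * (1 - v y) * v y ^ (n - 1) / (1 - v y ^ n)"
    if "x \<in> {0..}" "y \<in> {0..}" "x \<le> y" for x y
  proof -
    have "v x \<le> v y" using that a by (simp add: v_def)
    then have "(1 - v x) * v x ^ (n - 1) / (1 - v x ^ n) \<le> (1 - v y) * v y ^ (n - 1) / (1 - v y ^ n)"
      using that v[of x] v[of y] n by (intro geometric_tail_ratio_mono) auto
    then have "(n * a) * ((1 - v x) * v x ^ (n - 1) / (1 - v x ^ n))
        \<le> (n * a) * ((1 - v y) * v y ^ (n - 1) / (1 - v y ^ n))"
      using a by (intro mult_left_mono) auto
    then show ?thesis by (simp add: mult.assoc)
  qed
qed

lemma prod_le_power_mean_if_log_concave: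
  fixes g :: "real \<Rightarrow> real" and l :: "'a \<Rightarrow> real"
  assumes conc: "concave_on C (\<lambda>x. ln (g x))" and pos: "\<And>x. x \<in> C \<Longrightarrow> 0 < g x"
    and I: "finite I" "I \<noteq> {}" and l: "\<And>i. i \<in> I \<Longrightarrow> l i \<in> C"
  shows "(\<Prod>i\<in>I. g (l i)) \<le> g ((\<Sum>i\<in>I. l i) / card I) ^ card I"
proof -
  define m where "m = (\<Sum>i\<in>I. l i) / card I"
  have weights: "(\<Sum>i\<in>I. 1 / real (card I)) = 1" using I by simp
  have mean: "(\<Sum>i\<in>I. (1 / real (card I)) *\<^sub>R l i) = m"
    by (simp add: m_def sum_divide_distrib)
  have "(\<Sum>i\<in>I. (1 / real (card I)) *\<^sub>R l i) \<in> C"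
    using l by (intro convex_sum[OF I(1) concave_on_imp_convex[OF conc] weights]) auto
  then have "m \<in> C" unfolding mean .
  have "- ln (g (\<Sum>i\<in>I. (1 / real (card I)) *\<^sub>R l i))
      \<le> (\<Sum>i\<in>I. 1 / real (card I) * - ln (g (l i)))"
    using l by (intro convex_on_sum[OF I conc[unfolded concave_on_def] weights]) auto
  then have sum_ln: "(\<Sum>i\<in>I. ln (g (l i))) \<le> card I * ln (g m)"
    using I unfolding mean
    by (simp add: sum_negf sum_divide_distrib[symmetric] pos_divide_le_eq card_gt_0_iff mult.commute)
  have "(\<Prod>i\<in>I. g (l i)) = exp (\<Sum>i\<in>I. ln (g (l i)))"
    using pos l by (simp add: exp_sum[OF I(1)])
  also have "\<dots> \<le> exp (card I * ln (g m))"
    using sum_ln by simp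
  also have "\<dots> = g m ^ card I"
    using pos[OF \<open>m \<in> C\<close>] by (simp add: exp_of_nat_mult)
  finally show ?thesis unfolding m_def .
qed

lemma bin_entropy_one_minus: "bin_entropy (1 - x) = bin_entropy x"
  unfolding bin_entropy_def by (simp add: algebra_simps)

lemma bin_entropy_nonneg:
  assumes "0 \<le> x" "x \<le> 1"
  shows "0 \<le> bin_entropy x"
proof -
  have "x * log 2 x \<le> 0" if "0 \<le> x" "x \<le> 1" for x :: real
    using that by (cases "x = 0") (auto simp: mult_nonneg_nonpos)
  from this[of x] this[of "1 - x"] assms show ?thesis
    unfolding bin_entropy_def by simp
qed

lemma bin_entropy_mono:
  assumes "0 \<le> x" "x \<le> y" "y \<le> 1/2"
  shows "bin_entropy x \<le> bin_entropy y"
proof (cases "x = 0")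
  case True
  then show ?thesis using bin_entropy_nonneg[of y] assms by (simp add: bin_entropy_def)
next
  case False
  show ?thesis
  proof (rule DERIV_nonneg_imp_nondecreasing[OF assms(2)])
    fix z assume "x \<le> z" "z \<le> y"
    then have z: "0 < z" "z < 1" "z \<le> 1 - z" using False assms by auto
    have "bin_entropy = (\<lambda>z. (- (z * ln z) - (1 - z) * ln (1 - z)) / ln 2)"
      by (simp add: bin_entropy_def log_def fun_eq_iff diff_divide_distrib)
    moreover
    have "((\<lambda>z. z * ln z) has_real_derivative ln z + 1) (at z)"
      and "((\<lambda>z. (1 - z) * ln (1 - z)) has_real_derivative - ln (1 - z) - 1) (at z)"
      using z by (auto intro!: derivative_eq_intros)
    then have "((\<lambda>z. (- (z * ln z) - (1 - z) * ln (1 - z)) / ln 2)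
        has_real_derivative (- (ln z + 1) - (- ln (1 - z) - 1)) / ln 2) (at z)"
      by (intro DERIV_cdivide DERIV_diff DERIV_minus)
    then have "((\<lambda>z. (- (z * ln z) - (1 - z) * ln (1 - z)) / ln 2)
        has_real_derivative (ln (1 - z) - ln z) / ln 2) (at z)"
      by simp
    moreover have "(ln (1 - z) - ln z) / ln 2 \<ge> 0"
      using z by (intro divide_nonneg_pos) auto
    ultimately show "\<exists>D. (bin_entropy has_real_derivative D) (at z) \<and> 0 \<le> D" by auto
  qed
qed

lemma bin_entropy_half_one_minus_antimono:
  fixes w1 w2 :: real
  assumes "\<bar>w1\<bar> \<le> \<bar>w2\<bar>" "\<bar>w2\<bar> \<le> 1"
  shows "bin_entropy ((1 - w2) / 2) \<le> bin_entropy ((1 - w1) / 2)"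
proof -
  have sym: "bin_entropy ((1 - w) / 2) = bin_entropy ((1 - \<bar>w\<bar>) / 2)" for w :: real
  proof (cases "w \<ge> 0")
    case False
    then have "(1 - w) / 2 = 1 - (1 - \<bar>w\<bar>) / 2" by (simp add: field_simps)
    then show ?thesis by (simp only: bin_entropy_one_minus)
  qed simp
  show ?thesis unfolding sym[of w1] sym[of w2] using assms by (intro bin_entropy_mono) auto
qed

lemma prob_Suc_geometric_atMost:
  assumes "0 < p" "p \<le> 1"
  shows "measure_pmf.prob (map_pmf Suc (geometric_pmf p)) {..n} = 1 - (1 - p) ^ n"
proof -
  have "Suc -` {..n} = {..<n}" by auto
  then have "measure_pmf.prob (map_pmf Suc (geometric_pmf p)) {..n} = (\<Sum>k<n. (1 - p) ^ k * p)"
    using assms by (simp add: measure_measure_pmf_finite)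
  also have "\<dots> = 1 - (1 - p) ^ n"
    using one_diff_power_eq[of "1 - p" n] by (simp add: sum_distrib_right[symmetric])
  finally show ?thesis .
qed

lemma prob_Pi_pmf_Max_le:
  fixes P :: "'a \<Rightarrow> nat pmf"
  assumes "finite I" "I \<noteq> {}"
  shows "measure_pmf.prob (Pi_pmf I dflt P) {X. Max (X ` I) \<le> n}
       = (\<Prod>i\<in>I. measure_pmf.prob (P i) {..n})"
proof -
  have "{X. Max (X ` I) \<le> n} = Pi I (\<lambda>_. {..n})"
    using assms by (auto simp: Pi_def)
  then show ?thesis using assms by (simp add: measure_Pi_pmf_Pi)
qed

lemma nn_integral_nat_pmf_eq_suminf_tail:
  fixes P :: "'a pmf" and Y :: "'a \<Rightarrow> nat"
  shows "(\<integral>\<^sup>+x. ennreal (real (Y x)) \<partial>P) = (\<Sum>n. ennreal (1 - measure_pmf.prob P {x. Y x \<le> n}))"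
proof -
  have tail: "emeasure P {x \<in> space P. n < Y x} = ennreal (1 - measure_pmf.prob P {x. Y x \<le> n})" for n
  proof -
    have "{x \<in> space P. n < Y x} = UNIV - {x. Y x \<le> n}" by auto
    then show ?thesis
      using measure_pmf.prob_compl[of "{x. Y x \<le> n}" P] by (simp add: measure_pmf.emeasure_eq_measure)
  qed
  have "(\<integral>\<^sup>+x. of_nat (Y x) \<partial>P) = (\<Sum>n. emeasure P {x \<in> space P. n < Y x})"
    by (rule nn_integral_nat_function) simp
  then show ?thesis unfolding tail ennreal_of_nat_eq_real_of_nat .
qed

lemma expectation_le_if_stochastically_le:
  fixes P :: "'a pmf" and Q :: "'b pmf" and Y :: "'a \<Rightarrow> nat" and Z :: "'b \<Rightarrow> nat"
  assumes cdf: "\<And>n. measure_pmf.prob P {x. Y x \<le> n} \<le> measure_pmf.prob Q {x. Z x \<le> n}"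
    and int: "integrable P (\<lambda>x. real (Y x))"
  shows "integrable Q (\<lambda>x. real (Z x))"
    and "measure_pmf.expectation Q (\<lambda>x. real (Z x)) \<le> measure_pmf.expectation P (\<lambda>x. real (Y x))"
proof -
  have nn_P: "(\<integral>\<^sup>+x. ennreal (real (Y x)) \<partial>P) = ennreal (measure_pmf.expectation P (\<lambda>x. real (Y x)))"
    by (rule nn_integral_eq_integral[OF int]) auto
  have nn_le: "(\<integral>\<^sup>+x. ennreal (real (Z x)) \<partial>Q) \<le> (\<integral>\<^sup>+x. ennreal (real (Y x)) \<partial>P)"
    unfolding nn_integral_nat_pmf_eq_suminf_tail using cdf
    by (intro suminf_le summableI ennreal_leI) auto
  then have "(\<integral>\<^sup>+x. ennreal (real (Z x)) \<partial>Q) < \<infinity>"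
    unfolding nn_P using order.strict_trans1 by fastforce
  then show int_Q: "integrable Q (\<lambda>x. real (Z x))"
    by (intro integrableI_nonneg) auto
  have "ennreal (measure_pmf.expectation Q (\<lambda>x. real (Z x)))
      \<le> ennreal (measure_pmf.expectation P (\<lambda>x. real (Y x)))"
    using nn_le unfolding nn_P nn_integral_eq_integral[OF int_Q, simplified] .
  then show "measure_pmf.expectation Q (\<lambda>x. real (Z x)) \<le> measure_pmf.expectation P (\<lambda>x. real (Y x))"
    by (simp add: ennreal_le_iff integral_nonneg_AE)
qed

lemma expectation_Pi_pmf_cong_marginals:
  fixes f :: "('a \<Rightarrow> 'b) \<Rightarrow> real"
  assumes B: "finite B" and AB: "A \<subseteq> B"
    and f: "\<And>X. f (\<lambda>x. if x \<in> A then X x else dflt) = f X"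
    and pq: "\<And>x. x \<in> A \<Longrightarrow> p x = q x"
  shows "measure_pmf.expectation (Pi_pmf B dflt p) f = measure_pmf.expectation (Pi_pmf B dflt q) f"
proof -
  have "measure_pmf.expectation (Pi_pmf B dflt p) f = measure_pmf.expectation (Pi_pmf A dflt p) f"
    unfolding Pi_pmf_subset[OF B AB] by (simp add: f)
  also have "Pi_pmf A dflt p = Pi_pmf A dflt q" by (intro Pi_pmf_cong) (auto simp: pq)
  also have "measure_pmf.expectation (Pi_pmf A dflt q) f = measure_pmf.expectation (Pi_pmf B dflt q) f"
    unfolding Pi_pmf_subset[OF B AB] by (simp add: f)
  finally show ?thesis .
qed

lemma p_succ_eq_exp: "p_succ x = exp (- (ln 10 / 50) * x)"
  unfolding p_succ_def alpha_att_def powr_def by (simp add: field_simps)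

lemma p_succ_pos: "0 < p_succ x"
  by (simp add: p_succ_eq_exp)

lemma p_succ_le_1: "0 \<le> x \<Longrightarrow> p_succ x \<le> 1"
  by (simp add: p_succ_eq_exp mult_nonneg_nonneg)

lemma prod_success_cdf_le_equal_spacing:
  fixes l :: "nat \<Rightarrow> real"
  assumes l: "\<forall>i\<in>{1..N+1}. l i \<ge> 0" and L: "(\<Sum>i=1..N+1. l i) = L"
  shows "(\<Prod>i=1..N+1. 1 - (1 - p_succ (l i)) ^ n)
       \<le> (\<Prod>i=1..N+1. 1 - (1 - p_succ (L / real (N + 1))) ^ n)"
proof (cases "n = 0")
  case False
  define g where "g x = 1 - (1 - p_succ x) ^ n" for x
  have "concave_on {0..} (\<lambda>x. ln (g x))"
    unfolding g_def p_succ_eq_exp using False by (intro concave_on_ln_one_minus_power) auto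
  moreover have "0 < g x" if "x \<in> {0..}" for x
    using p_succ_pos[of x] p_succ_le_1[of x] that False by (simp add: g_def power_less_one_iff)
  ultimately have "(\<Prod>i=1..N+1. g (l i)) \<le> g ((\<Sum>i=1..N+1. l i) / card {1..N+1}) ^ card {1..N+1}"
    using l by (intro prod_le_power_mean_if_log_concave) auto
  then show ?thesis unfolding g_def L by simp
qed simp

lemma atLeastAtMost_Suc_add_split: "{1..Suc m + N} = {1..m} \<union> (\<lambda>i. i + m) ` {1..N + 1}"
  by auto

lemma chain_len_image:
  assumes "M \<ge> 1"
  shows "chain_len M d l ` {1..M + N} = d ` {1..M - 1} \<union> l ` {1..N + 1}"
proof -
  obtain m where M: "M = Suc m" using assms by (cases M) auto
  have "chain_len M d l ` {1..m} = d ` {1..m}"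
    by (intro image_cong) (auto simp: chain_len_def M)
  moreover have "chain_len M d l ` (\<lambda>i. i + m) ` {1..N + 1} = l ` {1..N + 1}"
    unfolding image_image by (intro image_cong) (auto simp: chain_len_def M)
  ultimately show ?thesis
    unfolding M atLeastAtMost_Suc_add_split image_Un by simp
qed

lemma prod_chain_len:
  assumes "M \<ge> 1"
  shows "(\<Prod>j=1..M+N. f (chain_len M d l j)) = (\<Prod>j=1..M-1. f (d j)) * (\<Prod>i=1..N+1. f (l i))"
proof -
  obtain m where M: "M = Suc m" using assms by (cases M) auto
  have "(\<Prod>j=1..M+N. f (chain_len M d l j))
      = (\<Prod>j=1..m. f (chain_len M d l j)) * (\<Prod>j\<in>(\<lambda>i. i + m) ` {1..N + 1}. f (chain_len M d l j))"
    unfolding M atLeastAtMost_Suc_add_split by (rule prod.union_disjoint) auto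
  also have "(\<Prod>j=1..m. f (chain_len M d l j)) = (\<Prod>j=1..m. f (d j))"
    by (intro prod.cong) (auto simp: chain_len_def M)
  also have "(\<Prod>j\<in>(\<lambda>i. i + m) ` {1..N + 1}. f (chain_len M d l j)) = (\<Prod>i=1..N+1. f (l i))"
    by (subst prod.reindex) (auto simp: chain_len_def M)
  finally show ?thesis by (simp add: M)
qed

lemma chain_len_nonneg:
  assumes "M \<ge> 1" "\<forall>j\<in>{1..M-1}. d j \<ge> 0" "\<forall>i\<in>{1..N+1}. l i \<ge> 0"
  shows "\<forall>j\<in>{1..M+N}. chain_len M d l j \<ge> 0"
proof
  fix j assume "j \<in> {1..M+N}"
  then have "chain_len M d l j \<in> d ` {1..M - 1} \<union> l ` {1..N + 1}"
    using chain_len_image[OF assms(1)] by blast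
  then show "chain_len M d l j \<ge> 0" using assms(2,3) by auto
qed

lemma prod_success_cdf_chain_le_equal_spacing:
  fixes l :: "nat \<Rightarrow> real"
  assumes M: "M \<ge> 1" and d: "\<forall>j\<in>{1..M-1}. d j \<ge> 0"
    and l: "\<forall>i\<in>{1..N+1}. l i \<ge> 0" and L: "(\<Sum>i=1..N+1. l i) = L"
  shows "(\<Prod>j=1..M+N. 1 - (1 - p_succ (chain_len M d l j)) ^ n)
       \<le> (\<Prod>j=1..M+N. 1 - (1 - p_succ (chain_len M d (\<lambda>_. L / real (N + 1)) j)) ^ n)"
proof -
  have "0 \<le> 1 - (1 - p_succ x) ^ n" if "0 \<le> x" for x
    using p_succ_pos[of x] p_succ_le_1[OF that] by (simp add: power_le_one)
  then have "0 \<le> (\<Prod>j=1..M-1. 1 - (1 - p_succ (d j)) ^ n)"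
    using d by (intro prod_nonneg) auto
  from mult_left_mono[OF prod_success_cdf_le_equal_spacing[OF l L] this]
  show ?thesis
    unfolding prod_chain_len[OF M, where f = "\<lambda>x. 1 - (1 - p_succ x) ^ n"] .
qed

lemma t_att_nonneg:
  assumes "K \<ge> 1" "\<forall>j\<in>{1..K}. len j \<ge> 0"
  shows "0 \<le> t_att K len"
proof -
  have "len 1 \<le> Max (len ` {1..K})" using assms(1) by (intro Max_ge) auto
  moreover have "0 \<le> len 1" using assms by auto
  ultimately show ?thesis by (simp add: t_att_def c_fib_def)
qed

lemma t_att_equal_spacing:
  fixes l :: "nat \<Rightarrow> real"
  assumes M: "M \<ge> 1" and l: "\<forall>i\<in>{1..N+1}. l i \<ge> 0" and L: "(\<Sum>i=1..N+1. l i) = L"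
  shows "t_att (M + N) (chain_len M d (\<lambda>_. L / real (N + 1))) \<le> t_att (M + N) (chain_len M d l)"
    and "0 < t_att (M + N) (chain_len M d l) \<Longrightarrow> 0 < t_att (M + N) (chain_len M d (\<lambda>_. L / real (N + 1)))"
proof -
  define D where "D = d ` {1..M - 1}"
  define \<Lambda> where "\<Lambda> = l ` {1..N + 1}"
  define \<mu> where "\<mu> = L / real (N + 1)"
  have fin: "finite D" "finite \<Lambda>" "\<Lambda> \<noteq> {}" by (simp_all add: D_def \<Lambda>_def)
  have t_att_equal: "t_att (M + N) (chain_len M d (\<lambda>_. \<mu>)) = Max (D \<union> {\<mu>}) / c_fib"
    unfolding t_att_def chain_len_image[OF M] D_def by (simp add: image_constant_conv)
  have t_att_l: "t_att (M + N) (chain_len M d l) = Max (D \<union> \<Lambda>) / c_fib"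
    unfolding t_att_def chain_len_image[OF M] D_def \<Lambda>_def ..
  have "L \<le> real (N + 1) * Max \<Lambda>"
    unfolding L[symmetric] \<Lambda>_def using sum_bounded_above[of "{1..N+1}" l "Max \<Lambda>"] fin
    by (simp add: \<Lambda>_def)
  then have "\<mu> \<le> Max \<Lambda>"
    by (simp add: \<mu>_def divide_le_eq mult.commute)
  also have "\<dots> \<le> Max (D \<union> \<Lambda>)"
    using fin by (intro Max_mono) auto
  finally have "\<forall>a\<in>D \<union> {\<mu>}. a \<le> Max (D \<union> \<Lambda>)"
    using fin by (auto intro: Max_ge)
  then have "Max (D \<union> {\<mu>}) \<le> Max (D \<union> \<Lambda>)"
    using fin by simp
  then show "t_att (M + N) (chain_len M d (\<lambda>_. L / real (N + 1))) \<le> t_att (M + N) (chain_len M d l)"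
    unfolding t_att_l t_att_equal[unfolded \<mu>_def] \<mu>_def by (simp add: c_fib_def divide_right_mono)
  assume "0 < t_att (M + N) (chain_len M d l)"
  then have pos: "0 < Max (D \<union> \<Lambda>)"
    unfolding t_att_l by (simp add: c_fib_def)
  have "Max (D \<union> \<Lambda>) \<in> D \<union> \<Lambda>"
    using fin by (intro Max_in) auto
  then have "0 < Max (D \<union> {\<mu>})"
  proof
    assume "Max (D \<union> \<Lambda>) \<in> D"
    then have "Max (D \<union> \<Lambda>) \<le> Max (D \<union> {\<mu>})"
      using fin by (intro Max_ge) auto
    then show ?thesis using pos by linarith
  next
    assume "Max (D \<union> \<Lambda>) \<in> \<Lambda>"
    then obtain i where i: "i \<in> {1..N + 1}" "0 < l i" using pos by (auto simp: \<Lambda>_def)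
    have "0 < L"
      unfolding L[symmetric] by (rule sum_pos2[of _ i]) (use l i in auto)
    then have "0 < \<mu>" by (simp add: \<mu>_def)
    moreover have "\<mu> \<le> Max (D \<union> {\<mu>})"
      using fin by (intro Max_ge) auto
    ultimately show ?thesis by linarith
  qed
  then show "0 < t_att (M + N) (chain_len M d (\<lambda>_. L / real (N + 1)))"
    unfolding t_att_equal[unfolded \<mu>_def] \<mu>_def by (simp add: c_fib_def)
qed

lemma prob_rounds_dist_Max_le:
  assumes "K \<ge> 1" and "\<forall>j\<in>{1..K}. len j \<ge> 0"
  shows "measure_pmf.prob (rounds_dist K len) {X. Max (X ` {1..K}) \<le> n}
       = (\<Prod>j=1..K. 1 - (1 - p_succ (len j)) ^ n)"
proof -
  have "measure_pmf.prob (rounds_dist K len) {X. Max (X ` {1..K}) \<le> n}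
      = (\<Prod>j=1..K. measure_pmf.prob (map_pmf Suc (geometric_pmf (p_succ (len j)))) {..n})"
    unfolding rounds_dist_def using assms(1) by (intro prob_Pi_pmf_Max_le) auto
  also have "\<dots> = (\<Prod>j=1..K. 1 - (1 - p_succ (len j)) ^ n)"
    using assms(2) by (intro prod.cong refl prob_Suc_geometric_atMost) (auto simp: p_succ_pos p_succ_le_1)
  finally show ?thesis .
qed

lemma rounds_dist_ge_1:
  assumes "X \<in> set_pmf (rounds_dist K len)" "j \<in> {1..K}"
  shows "1 \<le> X j"
  using assms by (auto simp: rounds_dist_def set_Pi_pmf PiE_dflt_def)

lemma ent_rate_nonneg:
  assumes "K \<ge> 1" "\<forall>j\<in>{1..K}. len j \<ge> 0"
  shows "0 \<le> ent_rate K len"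
  using t_att_nonneg[OF assms]
  by (simp add: ent_rate_def E_T_done_def integral_nonneg_AE)

lemma ent_rate_le:
  assumes K: "K \<ge> 1" and len1: "\<forall>j\<in>{1..K}. len1 j \<ge> 0" and len2: "\<forall>j\<in>{1..K}. len2 j \<ge> 0"
    and t_att_le: "t_att K len2 \<le> t_att K len1"
    and t_att_pos: "0 < t_att K len1 \<Longrightarrow> 0 < t_att K len2"
      \<comment> \<open>needed because a round of duration 0 gives the junk rate 1 / 0 = 0\<close>
    and cdf_le: "\<And>n. (\<Prod>j=1..K. 1 - (1 - p_succ (len1 j)) ^ n) \<le> (\<Prod>j=1..K. 1 - (1 - p_succ (len2 j)) ^ n)"
  shows "ent_rate K len1 \<le> ent_rate K len2"
proof -
  define Y where "Y X = Max (X ` {1..K})" for X :: "nat \<Rightarrow> nat"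
  define E where "E len = measure_pmf.expectation (rounds_dist K len) (\<lambda>X. real (Y X))" for len
  have rate_eq: "ent_rate K len = 1 / (t_att K len * E len)" for len
    by (simp add: ent_rate_def E_T_done_def E_def Y_def)
  have t_att2: "0 \<le> t_att K len2" by (rule t_att_nonneg[OF K len2])
  show ?thesis
  proof (cases "integrable (rounds_dist K len1) (\<lambda>X. real (Y X)) \<and> 0 < t_att K len1")
    case False
    then have "E len1 = 0 \<or> t_att K len1 = 0"
      using t_att2 t_att_le by (auto simp: E_def not_integrable_integral_eq)
    then have "ent_rate K len1 = 0" by (auto simp: rate_eq)
    then show ?thesis using ent_rate_nonneg[OF K len2] by simp
  next
    case True
    have "measure_pmf.prob (rounds_dist K len1) {X. Y X \<le> n}
        \<le> measure_pmf.prob (rounds_dist K len2) {X. Y X \<le> n}" for n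
      using cdf_le unfolding Y_def prob_rounds_dist_Max_le[OF K len1] prob_rounds_dist_Max_le[OF K len2] .
    note dominance = expectation_le_if_stochastically_le[OF this conjunct1[OF True]]
    have "AE X in rounds_dist K len2. 1 \<le> real (Y X)"
    proof (rule AE_pmfI)
      fix X assume "X \<in> set_pmf (rounds_dist K len2)"
      then have "1 \<le> X 1" using K by (intro rounds_dist_ge_1) auto
      also have "X 1 \<le> Y X" using K by (auto simp: Y_def intro: Max_ge)
      finally show "1 \<le> real (Y X)" by simp
    qed
    then have "1 \<le> E len2"
      unfolding E_def using dominance(1) by (intro measure_pmf.integral_ge_const)
    then have "0 < t_att K len2 * E len2" using True t_att_pos by simp
    moreover have "t_att K len2 * E len2 \<le> t_att K len1 * E len1"
      using dominance(2) t_att2 t_att_le \<open>1 \<le> E len2\<close> by (intro mult_mono) (auto simp: E_def)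
    ultimately show ?thesis unfolding rate_eq by (rule frac_le[rotated 2]) simp_all
  qed
qed

definition memory_decay :: "real \<Rightarrow> real \<Rightarrow> nat set \<Rightarrow> (nat \<Rightarrow> nat) \<Rightarrow> real" where
  "memory_decay T \<tau> S X = (\<Prod>i\<in>S. exp (- (\<tau> * \<bar>real (X i) - real (X (i - 1))\<bar>) / T))"

lemma memory_decay_nonneg: "0 \<le> memory_decay T \<tau> S X"
  unfolding memory_decay_def by (intro prod_nonneg) auto

lemma memory_decay_le_1: "T > 0 \<Longrightarrow> \<tau> \<ge> 0 \<Longrightarrow> memory_decay T \<tau> S X \<le> 1"
  unfolding memory_decay_def by (intro prod_le_1) (auto simp: mult_nonneg_nonneg)

lemma memory_decay_antimono:
  "T > 0 \<Longrightarrow> \<tau> \<le> \<tau>' \<Longrightarrow> memory_decay T \<tau>' S X \<le> memory_decay T \<tau> S X"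
  unfolding memory_decay_def by (intro prod_mono) (auto simp: divide_right_mono mult_right_mono)

lemma E_w_e2e_eq_memory_decay:
  assumes "t_att K len \<ge> 0"
  shows "E_w_e2e K len F T S
       = w0 F ^ K * measure_pmf.expectation (rounds_dist K len) (memory_decay T (t_att K len) S)"
proof -
  have "\<bar>t_att K len * real (X i) - t_att K len * real (X (i - 1))\<bar>
      = t_att K len * \<bar>real (X i) - real (X (i - 1))\<bar>" for X :: "nat \<Rightarrow> nat" and i
    using assms by (simp add: right_diff_distrib[symmetric] abs_mult)
  then show ?thesis unfolding E_w_e2e_def memory_decay_def by simp
qed

lemma E_w_e2e_abs_le:
  assumes T: "T > 0" and F: "0 \<le> F" "F \<le> 1"
    and t_att: "0 \<le> t_att K len2" "t_att K len2 \<le> t_att K len1"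
    and A: "A \<subseteq> {1..K}" "\<And>j. j \<in> A \<Longrightarrow> len1 j = len2 j"
    and S: "\<And>i. i \<in> S \<Longrightarrow> i \<in> A \<and> i - 1 \<in> A"
  shows "\<bar>E_w_e2e K len1 F T S\<bar> \<le> \<bar>E_w_e2e K len2 F T S\<bar>"
    and "\<bar>E_w_e2e K len2 F T S\<bar> \<le> 1"
proof -
  define e where "e len \<tau> = measure_pmf.expectation (rounds_dist K len) (memory_decay T \<tau> S)" for len \<tau>
  have int: "integrable (rounds_dist K len) (memory_decay T \<tau> S)" if "\<tau> \<ge> 0" for len \<tau>
    using T that memory_decay_nonneg memory_decay_le_1
    by (intro measure_pmf.integrable_const_bound[where B=1]) auto
  have e_nonneg: "0 \<le> e len \<tau>" for len \<tau>
    unfolding e_def by (intro integral_nonneg_AE) (simp add: memory_decay_nonneg)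
  have "e len1 (t_att K len1) \<le> e len1 (t_att K len2)"
    unfolding e_def using int t_att T memory_decay_antimono by (intro integral_mono) auto
  also have "\<dots> = e len2 (t_att K len2)"
    unfolding e_def rounds_dist_def
  proof (rule expectation_Pi_pmf_cong_marginals[OF _ A(1)])
    show "memory_decay T (t_att K len2) S (\<lambda>x. if x \<in> A then X x else 0)
        = memory_decay T (t_att K len2) S X" for X
      unfolding memory_decay_def using S by (intro prod.cong) auto
  qed (use A(2) in auto)
  finally have e_le: "e len1 (t_att K len1) \<le> e len2 (t_att K len2)" .
  have e2_le_1: "e len2 (t_att K len2) \<le> 1"
    unfolding e_def using T t_att int memory_decay_le_1
    by (intro measure_pmf.integral_le_const AE_pmfI) auto
  have w0: "\<bar>w0 F\<bar> \<le> 1" using F by (simp add: w0_def abs_le_iff)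
  have E_w: "E_w_e2e K len F T S = w0 F ^ K * e len (t_att K len)" if "0 \<le> t_att K len" for len
    unfolding e_def using that by (rule E_w_e2e_eq_memory_decay)
  show "\<bar>E_w_e2e K len1 F T S\<bar> \<le> \<bar>E_w_e2e K len2 F T S\<bar>"
    unfolding E_w[OF t_att(1)] E_w[OF order.trans[OF t_att]] abs_mult
    using e_le e_nonneg by (intro mult_left_mono) auto
  show "\<bar>E_w_e2e K len2 F T S\<bar> \<le> 1"
    unfolding E_w[OF t_att(1)] abs_mult power_abs
    using w0 e2_le_1 e_nonneg by (intro mult_le_one power_le_one) auto
qed

lemma SKF_le:
  assumes "T > 0" "0 \<le> F" "F \<le> 1"
    and "0 \<le> t_att K len2" "t_att K len2 \<le> t_att K len1"
    and "A \<subseteq> {1..K}" "\<And>j. j \<in> A \<Longrightarrow> len1 j = len2 j"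
    and "\<And>i. i \<in> S \<Longrightarrow> i \<in> A \<and> i - 1 \<in> A"
  shows "SKF K len1 F T S \<le> SKF K len2 F T S"
proof -
  have "\<bar>E_w_e2e K len1 F T S\<bar> \<le> \<bar>E_w_e2e K len2 F T S\<bar>" "\<bar>E_w_e2e K len2 F T S\<bar> \<le> 1"
    using E_w_e2e_abs_le[OF assms] by blast+
  from bin_entropy_half_one_minus_antimono[OF this] show ?thesis
    unfolding SKF_def Let_def by simp
qed

theorem mainTheorem6:
  fixes M N :: nat and F T L :: real and d l :: "nat \<Rightarrow> real"
  assumes "M \<ge> 1"
    and "0 \<le> F" and "F \<le> 1"
    and "T > 0"
    and "\<forall>j\<in>{1..M-1}. d j \<ge> 0"
    and "\<forall>i\<in>{1..N+1}. l i \<ge> 0"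
    and "(\<Sum>i=1..N+1. l i) = L"
  shows "SKR (M + N) (chain_len M d l) F T {2..M-1}
           \<le> SKR (M + N) (chain_len M d (\<lambda>_. L / real (N + 1))) F T {2..M-1}"
proof -
  note M = assms(1) and F = assms(2,3) and T = assms(4) and d = assms(5) and l = assms(6) and L = assms(7)
  let ?len = "chain_len M d l" and ?equal = "chain_len M d (\<lambda>_. L / real (N + 1))"
  have "0 \<le> L" unfolding L[symmetric] using l by (intro sum_nonneg) auto
  then have len: "\<forall>j\<in>{1..M+N}. ?len j \<ge> 0" and equal: "\<forall>j\<in>{1..M+N}. ?equal j \<ge> 0"
    using chain_len_nonneg[OF M d] l by auto
  note t_att = t_att_equal_spacing[OF M l L, of d]
  have "ent_rate (M + N) ?len \<le> ent_rate (M + N) ?equal"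
    using M len equal t_att prod_success_cdf_chain_le_equal_spacing[OF M d l L] by (intro ent_rate_le) auto
  moreover have "SKF (M + N) ?len F T {2..M-1} \<le> SKF (M + N) ?equal F T {2..M-1}"
  proof (rule SKF_le[OF T F _ t_att(1), where A = "{1..M-1}"])
    show "0 \<le> t_att (M + N) ?equal" using M equal by (intro t_att_nonneg) auto
    show "?len j = ?equal j" if "j \<in> {1..M-1}" for j
      using that by (auto simp: chain_len_def)
  qed auto
  ultimately show ?thesis
    unfolding SKR_def using M equal by (intro mult_mono) (auto simp: SKF_def ent_rate_nonneg)
qed

end
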